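(* Let $k\in\mathbb N$, $n=8k$, $|G\rangle$ the $n$-qubit fully-connected graph state, $\rho=\mathcal E^{\otimes n}(|G\rangle\langle G|)$ with $\mathcal E$ the depolarizing channel of error probability $p$, $F=\langle G|\rho|G\rangle$ and $F_{\rm est}=(1-\tfrac43p)^{6k}$. Then for all $0\le p\le3/4$, $$0\le F-F_{\rm est}<\frac12\Big(1-\frac1{8k}\Big)\Big(1-\frac1{4k}\Big)^{8k-2}+\frac12\Big(\frac23\Big)^{8k}+\frac1{3k},$$ and the right-hand side decreases monotonically in $k$ and converges to $1/(2e^2)$ as $k\to\infty$.
   Context: Graph state $|G\rangle=\big(\prod_{(i,j)\in E}CZ_{i,j}\big)|+\rangle^{\otimes n}$; the fully-connected graph has an edge between every pair of distinct vertices. Depolarizing channel: $\mathcal E(\cdot)=(1-p)(\cdot)+\frac p3[X(\cdot)X+Y(\cdot)Y+Z(\cdot)Z]$, applied independently to each qubit. *)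

theory Defs
  imports Complex_Main
begin

text \<open>n-qubit states: computational basis states are indexed by subsets x of {..<n}
  (x = set of qubits in state |1>). Vectors: nat set => complex; operators / density
  matrices: nat set => nat set => complex (row index, column index).\<close>

definition basis :: "nat \<Rightarrow> nat set set" where
  "basis n = Pow {..<n}"

definition plus_state :: "nat \<Rightarrow> nat set \<Rightarrow> complex" where
  "plus_state n x = complex_of_real (1 / sqrt (2 ^ n))"

definition cz :: "nat \<Rightarrow> nat \<Rightarrow> (nat set \<Rightarrow> complex) \<Rightarrow> nat set \<Rightarrow> complex" where
  "cz i j \<psi> x = (if i \<in> x \<and> j \<in> x then - \<psi> x else \<psi> x)"

definition graph_state :: "nat \<Rightarrow> (nat \<times> nat) list \<Rightarrow> nat set \<Rightarrow> complex" where
  "graph_state n E = fold (\<lambda>(i, j) \<psi>. cz i j \<psi>) E (plus_state n)"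

definition complete_edges :: "nat \<Rightarrow> (nat \<times> nat) list" where
  "complete_edges n = concat (map (\<lambda>i. map (\<lambda>j. (i, j)) [Suc i..<n]) [0..<n])"

definition pure_dm :: "(nat set \<Rightarrow> complex) \<Rightarrow> nat set \<Rightarrow> nat set \<Rightarrow> complex" where
  "pure_dm \<psi> x y = \<psi> x * cnj (\<psi> y)"

text \<open>Single-qubit Pauli matrices, indexed by (output bit, input bit);
  1 = X, 2 = Y, 3 = Z, anything else = identity.\<close>
definition pauli :: "nat \<Rightarrow> bool \<Rightarrow> bool \<Rightarrow> complex" where
  "pauli s a b =
     (if s = 1 then (if a \<noteq> b then 1 else 0)
      else if s = 2 then (if a \<and> \<not> b then \<i> else if \<not> a \<and> b then - \<i> else 0)
      else if s = 3 then (if a = b then (if a then -1 else 1) else 0)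
      else (if a = b then 1 else 0))"

definition local_op :: "nat \<Rightarrow> (bool \<Rightarrow> bool \<Rightarrow> complex) \<Rightarrow> nat set \<Rightarrow> nat set \<Rightarrow> complex" where
  "local_op q M x y = (if x - {q} = y - {q} then M (q \<in> x) (q \<in> y) else 0)"

definition conj_by :: "nat \<Rightarrow> (nat set \<Rightarrow> nat set \<Rightarrow> complex) \<Rightarrow> (nat set \<Rightarrow> nat set \<Rightarrow> complex)
    \<Rightarrow> nat set \<Rightarrow> nat set \<Rightarrow> complex" where
  "conj_by n A \<rho> x y = (\<Sum>u\<in>basis n. \<Sum>v\<in>basis n. A x u * \<rho> u v * cnj (A y v))"

definition depol :: "real \<Rightarrow> nat \<Rightarrow> nat \<Rightarrow> (nat set \<Rightarrow> nat set \<Rightarrow> complex) \<Rightarrow> nat set \<Rightarrow> nat set \<Rightarrow> complex" where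
  "depol p n q \<rho> x y = complex_of_real (1 - p) * \<rho> x y
      + complex_of_real (p / 3) * (\<Sum>s\<in>{1,2,3}. conj_by n (local_op q (pauli s)) \<rho> x y)"

definition depol_all :: "real \<Rightarrow> nat \<Rightarrow> (nat set \<Rightarrow> nat set \<Rightarrow> complex) \<Rightarrow> nat set \<Rightarrow> nat set \<Rightarrow> complex" where
  "depol_all p n \<rho> = fold (depol p n) [0..<n] \<rho>"

definition expval :: "nat \<Rightarrow> (nat set \<Rightarrow> complex) \<Rightarrow> (nat set \<Rightarrow> nat set \<Rightarrow> complex) \<Rightarrow> complex" where
  "expval n \<psi> \<rho> = (\<Sum>x\<in>basis n. \<Sum>y\<in>basis n. cnj (\<psi> x) * \<rho> x y * \<psi> y)"

definition fidelity_full :: "nat \<Rightarrow> real \<Rightarrow> complex" where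
  "fidelity_full n p =
     (let G = graph_state n (complete_edges n) in expval n G (depol_all p n (pure_dm G)))"

definition F_est :: "nat \<Rightarrow> real \<Rightarrow> real" where
  "F_est k p = (1 - 4/3 * p) ^ (6 * k)"

definition bound7 :: "nat \<Rightarrow> real" where
  "bound7 k = 1/2 * (1 - 1 / (8 * real k)) * (1 - 1 / (4 * real k)) ^ (8 * k - 2)
             + 1/2 * (2/3) ^ (8 * k) + 1 / (3 * real k)"

end

theory Submission
  imports Defs "HOL-Real_Asymp.Real_Asymp" "HOL-Analysis.Complex_Transcendental"
begin

text \<open>Identify a basis state with the set x of qubits in state 1. The complete graph state
  has amplitude (-1)^(|x| choose 2) / sqrt (2^n) at x, so flipping qubit q in both indices
  of its density matrix multiplies the entry (x, y) by (-1)^|x \<triangle> y|. Consequently each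
  single-qubit depolarizing channel acts diagonally on the entries, and after all n of them
  the entry (x, y) is damped by c^|x \<triangle> y| if |x \<triangle> y| is even and by c^n if it is odd,
  where c = 1 - 4p/3. Summing over x and y gives
  F = (((1 + c)/2)^n + ((1 - c)/2)^n + c^n) / 2.

  For n = 8k the lower bound F \<ge> c^(6k) is AM-GM together with c \<le> ((1 + c)/2)^2.
  For the upper bound, convexity gives ((1 + c)/2)^k \<le> (1 + c^k)/2, which reduces the
  claim to a polynomial inequality in y = c^k on [0, 1], bounded by 1/16 \<le> exp(-2)/2.
  The leading term of the bound is exp (\<psi>(1/(4k)))/2 for a function \<psi> that is
  increasing on (0, 1/4], so it decreases in k towards its limit exp(-2)/2.\<close>

lemma card_ordered_pairs:
  fixes A :: "'a::linorder set"
  assumes "finite A"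
  shows "card {(i, j). i \<in> A \<and> j \<in> A \<and> i < j} = card A choose 2"
proof -
  have "bij_betw (\<lambda>(i, j). {i, j}) {(i, j). i \<in> A \<and> j \<in> A \<and> i < j} {K. K \<subseteq> A \<and> card K = 2}"
  proof (rule bij_betw_imageI)
    show "inj_on (\<lambda>(i, j). {i, j}) {(i, j). i \<in> A \<and> j \<in> A \<and> i < j}"
      by (auto simp: inj_on_def doubleton_eq_iff)
    show "(\<lambda>(i, j). {i, j}) ` {(i, j). i \<in> A \<and> j \<in> A \<and> i < j} = {K. K \<subseteq> A \<and> card K = 2}"
    proof (intro equalityI subsetI)
      fix K assume "K \<in> {K. K \<subseteq> A \<and> card K = 2}"
      then obtain i j where "K = {i, j}" "i \<noteq> j" "i \<in> A" "j \<in> A"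
        by (auto simp: card_2_iff)
      then have "K = {min i j, max i j}" "min i j < max i j" "min i j \<in> A" "max i j \<in> A"
        by (auto simp: min_def max_def)
      then show "K \<in> (\<lambda>(i, j). {i, j}) ` {(i, j). i \<in> A \<and> j \<in> A \<and> i < j}"
        by (auto intro!: image_eqI[where x="(min i j, max i j)"])
    qed auto
  qed
  then show ?thesis using n_subsets[OF assms, of 2] by (simp add: bij_betw_same_card)
qed

lemma sum_Pow_power_card:
  fixes z :: "'a::comm_semiring_1"
  assumes "finite A"
  shows "(\<Sum>X\<in>Pow A. z ^ card X) = (1 + z) ^ card A"
  using prod_add[OF assms, of "\<lambda>_. z" "\<lambda>_. 1"] by (simp add: add.commute)

lemma card_sym_diff:
  assumes "finite x" "finite y"
  shows "card x + card y = card (sym_diff x y) + 2 * card (x \<inter> y)"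
proof -
  have "card (sym_diff x y) = card ((x \<union> y) - (x \<inter> y))"
    by (rule arg_cong[where f = card]) auto
  also have "\<dots> = card (x \<union> y) - card (x \<inter> y)"
    using assms by (intro card_Diff_subset) auto
  finally have "card (sym_diff x y) = card (x \<union> y) - card (x \<inter> y)" .
  moreover have "card (x \<inter> y) \<le> card (x \<union> y)"
    using assms by (intro card_mono) auto
  ultimately show ?thesis using card_Un_Int[OF assms] by simp
qed

lemma minus_one_power_card_sym_diff:
  "finite x \<Longrightarrow> finite y \<Longrightarrow> (-1::'a::ring_1) ^ card (sym_diff x y) = (-1) ^ (card x + card y)"
  by (simp add: card_sym_diff power_add power_mult)

lemma sum_Pow_sym_diff:
  assumes "x \<subseteq> A"
  shows "(\<Sum>y\<in>Pow A. f (sym_diff x y)) = (\<Sum>D\<in>Pow A. f D)"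
  by (rule sum.reindex_bij_witness[of _ "sym_diff x" "sym_diff x"]) (use assms in auto)

subsection \<open>The complete graph state\<close>

lemma fold_cz_apply:
  "fold (\<lambda>(i, j) \<psi>. cz i j \<psi>) E \<psi> x
     = (-1) ^ length (filter (\<lambda>(i, j). i \<in> x \<and> j \<in> x) E) * \<psi> x"
proof (induction E arbitrary: \<psi>)
  case (Cons e E)
  then show ?case by (cases e) (simp add: cz_def)
qed simp

lemma length_filter_complete_edges:
  "length (filter (\<lambda>(i, j). i \<in> x \<and> j \<in> x) (complete_edges n)) = card (x \<inter> {..<n}) choose 2"
proof -
  define A where "A = x \<inter> {..<n}"
  have "length (filter (\<lambda>(i, j). i \<in> x \<and> j \<in> x) (complete_edges n))
      = (\<Sum>i<n. length (filter (\<lambda>(i, j). i \<in> x \<and> j \<in> x) (map (Pair i) [Suc i..<n])))"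
    unfolding complete_edges_def
    by (simp add: filter_concat length_concat comp_def atLeast0LessThan
          flip: sum_set_upt_conv_sum_list_nat)
  also have "\<dots> = (\<Sum>i\<in>A. card {j \<in> A. i < j})"
  proof -
    have "length (filter (\<lambda>(i, j). i \<in> x \<and> j \<in> x) (map (Pair i) [Suc i..<n]))
        = (if i \<in> A then card {j \<in> A. i < j} else 0)" if "i < n" for i
    proof -
      have "{j \<in> A. i < j} = {j. j \<in> x} \<inter> set [Suc i..<n]" by (auto simp: A_def)
      then show ?thesis
        using that by (simp add: filter_map comp_def distinct_length_filter A_def)
    qed
    then show ?thesis
      by (simp add: sum.If_cases A_def Int_commute lessThan_def)
  qed
  also have "\<dots> = card (SIGMA i:A. {j \<in> A. i < j})"
    by (simp add: A_def)
  also have "(SIGMA i:A. {j \<in> A. i < j}) = {(i, j). i \<in> A \<and> j \<in> A \<and> i < j}"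
    by auto
  finally show ?thesis using card_ordered_pairs[of A] unfolding A_def by simp
qed

definition clique_sign :: "nat set \<Rightarrow> complex" where
  "clique_sign x = (-1) ^ (card x choose 2)"

lemma complete_graph_state_apply:
  assumes "x \<in> basis n"
  shows "graph_state n (complete_edges n) x = clique_sign x * complex_of_real (1 / sqrt (2 ^ n))"
proof -
  have "x \<inter> {..<n} = x" using assms by (auto simp: basis_def)
  then show ?thesis
    by (simp add: graph_state_def fold_cz_apply length_filter_complete_edges clique_sign_def
        plus_state_def)
qed

lemma cnj_clique_sign [simp]: "cnj (clique_sign x) = clique_sign x"
  by (simp add: clique_sign_def)

lemma clique_sign_square [simp]: "clique_sign x * clique_sign x = 1"
  by (simp add: clique_sign_def flip: power_add mult_2 add: power_mult)

lemma clique_sign_insert: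
  "finite x \<Longrightarrow> q \<notin> x \<Longrightarrow> clique_sign (insert q x) = (-1) ^ card x * clique_sign x"
  by (simp add: clique_sign_def numeral_2_eq_2 power_add)

definition flip_qubit :: "nat \<Rightarrow> nat set \<Rightarrow> nat set" where
  "flip_qubit q x = (if q \<in> x then x - {q} else insert q x)"

lemma flip_qubit_basis: "x \<in> basis n \<Longrightarrow> q < n \<Longrightarrow> flip_qubit q x \<in> basis n"
  by (auto simp: flip_qubit_def basis_def)

lemma flip_qubit_neq: "flip_qubit q x \<noteq> x"
  by (auto simp: flip_qubit_def)

lemma mem_flip_qubit: "q \<in> flip_qubit q x \<longleftrightarrow> q \<notin> x"
  by (auto simp: flip_qubit_def)

lemma flip_qubit_Diff: "flip_qubit q x - {q} = x - {q}"
  by (auto simp: flip_qubit_def)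

lemma sym_diff_flip_qubit: "sym_diff (flip_qubit q x) (flip_qubit q y) = sym_diff x y"
  by (auto simp: flip_qubit_def)

lemma Diff_eq_flip_qubit: "x - {q} = u - {q} \<Longrightarrow> u = x \<or> u = flip_qubit q x"
  by (auto simp: flip_qubit_def)

lemma clique_sign_flip_qubit:
  assumes "finite x"
  shows "clique_sign (flip_qubit q x) = (-1) ^ card (x - {q}) * clique_sign x"
proof (cases "q \<in> x")
  case True
  then have "clique_sign x = (-1) ^ card (x - {q}) * clique_sign (x - {q})"
    using assms clique_sign_insert[of "x - {q}" q] by (simp add: insert_absorb)
  then have "(-1) ^ card (x - {q}) * clique_sign x = clique_sign (x - {q})"
    by (simp flip: power_add mult_2 add: power_mult)
  then show ?thesis using True by (simp add: flip_qubit_def)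
qed (simp add: flip_qubit_def clique_sign_insert assms)

lemma pure_dm_complete_graph_state:
  assumes "x \<in> basis n" "y \<in> basis n"
  shows "pure_dm (graph_state n (complete_edges n)) x y = clique_sign x * clique_sign y / 2 ^ n"
proof -
  have "complex_of_real (1 / sqrt (2 ^ n)) * complex_of_real (1 / sqrt (2 ^ n)) = 1 / 2 ^ n"
    by (simp flip: of_real_mult)
  then show ?thesis
    using assms by (simp add: pure_dm_def complete_graph_state_apply algebra_simps)
qed

lemma pure_dm_complete_graph_state_flip_qubit:
  assumes "q < n" "x \<in> basis n" "y \<in> basis n" "q \<in> x \<longleftrightarrow> q \<in> y"
  shows "pure_dm (graph_state n (complete_edges n)) (flip_qubit q x) (flip_qubit q y)
       = (-1) ^ card (sym_diff x y) * pure_dm (graph_state n (complete_edges n)) x y"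
proof -
  have fin: "finite (x - {q})" "finite (y - {q})"
    using assms(2,3) by (auto simp: basis_def intro: finite_subset)
  have "sym_diff x y = sym_diff (x - {q}) (y - {q})"
    using assms(4) by auto
  then have "(-1::complex) ^ card (sym_diff x y) = (-1) ^ card (x - {q}) * (-1) ^ card (y - {q})"
    using minus_one_power_card_sym_diff[OF fin] by (simp add: power_add)
  then show ?thesis
    using assms fin
    by (simp add: pure_dm_complete_graph_state flip_qubit_basis clique_sign_flip_qubit)
qed

subsection \<open>The depolarizing channel on matrix entries\<close>

lemma sum_basis_two_points:
  assumes "x \<in> basis n" "q < n"
    and "\<And>u. u \<in> basis n \<Longrightarrow> u \<noteq> x \<Longrightarrow> u \<noteq> flip_qubit q x \<Longrightarrow> g u = 0"
  shows "(\<Sum>u\<in>basis n. g u) = g x + g (flip_qubit q x)"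
proof -
  have "(\<Sum>u\<in>basis n. g u) = (\<Sum>u\<in>{x, flip_qubit q x}. g u)"
    by (rule sum.mono_neutral_right) (use assms flip_qubit_basis in \<open>auto simp: basis_def\<close>)
  then show ?thesis using flip_qubit_neq[of q x] by simp
qed

lemma sum_local_op_left:
  assumes "x \<in> basis n" "q < n"
  shows "(\<Sum>u\<in>basis n. local_op q M x u * f u)
       = M (q \<in> x) (q \<in> x) * f x + M (q \<in> x) (q \<notin> x) * f (flip_qubit q x)"
  by (subst sum_basis_two_points[OF assms])
     (auto simp: local_op_def flip_qubit_Diff mem_flip_qubit dest: Diff_eq_flip_qubit)

lemma sum_local_op_right:
  assumes "y \<in> basis n" "q < n"
  shows "(\<Sum>v\<in>basis n. f v * cnj (local_op q M y v))
       = f y * cnj (M (q \<in> y) (q \<in> y)) + f (flip_qubit q y) * cnj (M (q \<in> y) (q \<notin> y))"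
  by (subst sum_basis_two_points[OF assms])
     (auto simp: local_op_def flip_qubit_Diff mem_flip_qubit dest: Diff_eq_flip_qubit)

lemma conj_by_local_op:
  assumes "x \<in> basis n" "y \<in> basis n" "q < n"
  shows "conj_by n (local_op q M) \<rho> x y =
      M (q \<in> x) (q \<in> x) * (\<rho> x y * cnj (M (q \<in> y) (q \<in> y))
        + \<rho> x (flip_qubit q y) * cnj (M (q \<in> y) (q \<notin> y)))
    + M (q \<in> x) (q \<notin> x) * (\<rho> (flip_qubit q x) y * cnj (M (q \<in> y) (q \<in> y))
        + \<rho> (flip_qubit q x) (flip_qubit q y) * cnj (M (q \<in> y) (q \<notin> y)))"
proof -
  have "conj_by n (local_op q M) \<rho> x y
      = (\<Sum>u\<in>basis n. local_op q M x u * (\<Sum>v\<in>basis n. \<rho> u v * cnj (local_op q M y v)))"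
    unfolding conj_by_def by (simp add: sum_distrib_left mult.assoc)
  then show ?thesis
    by (simp add: sum_local_op_left[OF assms(1,3)] sum_local_op_right[OF assms(2,3)])
qed

text \<open>Conjugation by X and by Y both yield the entry at flipped indices, with equal signs
  when the q-th bits of x and y agree and with opposite signs otherwise; Z yields the entry
  itself, negated exactly when these bits differ.\<close>

lemma depol_apply:
  assumes "x \<in> basis n" "y \<in> basis n" "q < n"
  shows "depol p n q \<rho> x y =
    (if q \<in> x \<longleftrightarrow> q \<in> y
     then of_real (1 - 2/3 * p) * \<rho> x y + of_real (2/3 * p) * \<rho> (flip_qubit q x) (flip_qubit q y)
     else of_real (1 - 4/3 * p) * \<rho> x y)"
proof -
  have "depol p n q \<rho> x y = of_real (1 - p) * \<rho> x y
      + of_real (p / 3) * (conj_by n (local_op q (pauli 1)) \<rho> x y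
         + conj_by n (local_op q (pauli 2)) \<rho> x y + conj_by n (local_op q (pauli 3)) \<rho> x y)"
    unfolding depol_def by (simp add: add.assoc)
  then show ?thesis
    unfolding conj_by_local_op[OF assms]
    by (cases "q \<in> x"; cases "q \<in> y") (simp_all add: pauli_def algebra_simps)
qed

text \<open>The damping of the entry (x, y) by the channels on qubits 0, ..., m - 1, for a state
  with the flip symmetry of the complete graph state, as a function of D = x \<triangle> y: for even
  |D| the flipped entry equals the entry, so only the qubits in D damp it; for odd |D|
  every qubit does.\<close>

definition depol_damping :: "real \<Rightarrow> nat \<Rightarrow> nat set \<Rightarrow> real" where
  "depol_damping c m D = (if even (card D) then c ^ card (D \<inter> {..<m}) else c ^ m)"

lemma depol_damping_Suc_notin:
  assumes "m \<notin> D"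
  shows "depol_damping (1 - 4/3 * p) (Suc m) D
       = (1 - 2/3 * p + 2/3 * p * (-1) ^ card D) * depol_damping (1 - 4/3 * p) m D"
proof -
  have "D \<inter> {..<Suc m} = D \<inter> {..<m}" using assms by (auto simp: lessThan_Suc)
  then show ?thesis by (simp add: depol_damping_def algebra_simps)
qed

lemma depol_damping_Suc_in:
  assumes "m \<in> D"
  shows "depol_damping c (Suc m) D = c * depol_damping c m D"
proof -
  have "D \<inter> {..<Suc m} = insert m (D \<inter> {..<m})" using assms by (auto simp: lessThan_Suc)
  then show ?thesis by (simp add: depol_damping_def)
qed

lemma fold_depol_apply:
  fixes \<rho> :: "nat set \<Rightarrow> nat set \<Rightarrow> complex"
  assumes flip_sym: "\<And>q x y. q < n \<Longrightarrow> x \<in> basis n \<Longrightarrow> y \<in> basis n \<Longrightarrow> q \<in> x \<longleftrightarrow> q \<in> y \<Longrightarrow>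
      \<rho> (flip_qubit q x) (flip_qubit q y) = (-1) ^ card (sym_diff x y) * \<rho> x y"
    and "m \<le> n" "x \<in> basis n" "y \<in> basis n"
  shows "fold (depol p n) [0..<m] \<rho> x y
       = \<rho> x y * of_real (depol_damping (1 - 4/3 * p) m (sym_diff x y))"
  using assms(2-4)
proof (induction m arbitrary: x y)
  case 0
  then show ?case by (simp add: depol_damping_def)
next
  case (Suc m)
  let ?R = "fold (depol p n) [0..<m] \<rho>"
  define D where "D = sym_diff x y"
  define d where "d = depol_damping (1 - 4/3 * p) m D"
  have m: "m < n" using Suc.prems by simp
  have R: "?R x y = \<rho> x y * of_real d"
    using Suc by (simp add: D_def d_def)
  have "fold (depol p n) [0..<Suc m] \<rho> x y = depol p n m ?R x y" by simp
  also have "\<dots> = \<rho> x y * of_real (depol_damping (1 - 4/3 * p) (Suc m) D)"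
  proof (cases "m \<in> x \<longleftrightarrow> m \<in> y")
    case True
    then have "m \<notin> D" by (auto simp: D_def)
    have "?R (flip_qubit m x) (flip_qubit m y) = (-1) ^ card D * \<rho> x y * of_real d"
      using Suc flip_sym[OF m Suc.prems(2,3) True]
      by (simp add: flip_qubit_basis m sym_diff_flip_qubit D_def d_def)
    then have "depol p n m ?R x y = \<rho> x y * of_real ((1 - 2/3 * p + 2/3 * p * (-1) ^ card D) * d)"
      using True Suc.prems R by (simp add: depol_apply m algebra_simps)
    also have "(1 - 2/3 * p + 2/3 * p * (-1) ^ card D) * d = depol_damping (1 - 4/3 * p) (Suc m) D"
      using depol_damping_Suc_notin[OF \<open>m \<notin> D\<close>, of p] by (simp add: d_def)
    finally show ?thesis .
  next
    case False
    then have "m \<in> D" by (auto simp: D_def)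
    then show ?thesis
      using False Suc.prems R by (simp add: depol_apply m depol_damping_Suc_in d_def)
  qed
  finally show ?case by (simp add: D_def)
qed

subsection \<open>The fidelity of the depolarized complete graph state\<close>

lemma depol_all_complete_graph_state:
  assumes "x \<in> basis n" "y \<in> basis n"
  shows "depol_all p n (pure_dm (graph_state n (complete_edges n))) x y
       = pure_dm (graph_state n (complete_edges n)) x y
         * of_real (depol_damping (1 - 4/3 * p) n (sym_diff x y))"
  unfolding depol_all_def
  by (rule fold_depol_apply[OF pure_dm_complete_graph_state_flip_qubit order.refl assms])

lemma sum_depol_damping:
  assumes "n \<ge> 1"
  shows "(\<Sum>D\<in>Pow {..<n}. depol_damping c n D) = ((1 + c) ^ n + (1 - c) ^ n + (2 * c) ^ n) / 2"
proof -
  have parity_split: "depol_damping c n D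
      = c ^ card D / 2 + (-c) ^ card D / 2 + c ^ n / 2 - c ^ n / 2 * (-1) ^ card D"
    if "D \<in> Pow {..<n}" for D
  proof -
    have "D \<inter> {..<n} = D" using that by auto
    then show ?thesis by (simp add: depol_damping_def power_minus')
  qed
  have alternating: "(\<Sum>D\<in>Pow {..<n}. (-1::real) ^ card D) = 0"
    using sum_Pow_power_card[of "{..<n}" "-1::real"] assms by simp
  have "(\<Sum>D\<in>Pow {..<n}. depol_damping c n D) = (\<Sum>D\<in>Pow {..<n}.
      c ^ card D / 2 + (-c) ^ card D / 2 + c ^ n / 2 - c ^ n / 2 * (-1) ^ card D)"
    by (rule sum.cong) (simp_all add: parity_split)
  also have "\<dots> = (1 + c) ^ n / 2 + (1 - c) ^ n / 2 + 2 ^ n * c ^ n / 2"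
    by (simp add: sum.distrib sum_subtractf sum_divide_distrib[symmetric]
        sum_distrib_left[symmetric] sum_Pow_power_card alternating card_Pow)
  finally show ?thesis by (simp add: power_mult_distrib add_divide_distrib)
qed

definition clique_fidelity :: "nat \<Rightarrow> real \<Rightarrow> real" where
  "clique_fidelity n c = (((1 + c) / 2) ^ n + ((1 - c) / 2) ^ n + c ^ n) / 2"

lemma fidelity_full_eq_clique_fidelity:
  assumes "n \<ge> 1"
  shows "fidelity_full n p = of_real (clique_fidelity n (1 - 4/3 * p))"
proof -
  define G where "G = graph_state n (complete_edges n)"
  define c where "c = 1 - 4/3 * p"
  define h where "h D = depol_damping c n D / 4 ^ n" for D
  have entry: "cnj (G x) * depol_all p n (pure_dm G) x y * G y = of_real (h (sym_diff x y))"
    if "x \<in> basis n" "y \<in> basis n" for x y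
  proof -
    have dm: "pure_dm G u v = clique_sign u * clique_sign v / 2 ^ n"
      if "u \<in> basis n" "v \<in> basis n" for u v
      using pure_dm_complete_graph_state[OF that] by (simp add: G_def)
    have "cnj (G x) * depol_all p n (pure_dm G) x y * G y
        = pure_dm G y x * pure_dm G x y * of_real (depol_damping c n (sym_diff x y))"
      using depol_all_complete_graph_state[OF that, of p]
      by (simp add: pure_dm_def c_def ac_simps flip: G_def)
    also have "\<dots> = (clique_sign x * clique_sign x) * (clique_sign y * clique_sign y)
        * of_real (depol_damping c n (sym_diff x y)) / (2 ^ n * 2 ^ n)"
      using that by (simp add: dm ac_simps)
    also have "\<dots> = of_real (h (sym_diff x y))"
      by (simp add: h_def flip: power_mult_distrib)
    finally show ?thesis .
  qed
  have "fidelity_full n p = (\<Sum>x\<in>basis n. \<Sum>y\<in>basis n. of_real (h (sym_diff x y)))"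
    by (simp add: fidelity_full_def expval_def entry flip: G_def)
  also have "\<dots> = of_real (\<Sum>x\<in>basis n. \<Sum>D\<in>basis n. h D)"
    unfolding of_real_sum
    by (rule sum.cong[OF refl])
       (simp add: basis_def sum_Pow_sym_diff[where f = "\<lambda>D. of_real (h D)"])
  also have "(\<Sum>x\<in>basis n. \<Sum>D\<in>basis n. h D)
      = 2 ^ n * (((1 + c) ^ n + (1 - c) ^ n + (2 * c) ^ n) / 2 / 4 ^ n)"
    by (simp add: h_def basis_def card_Pow sum_depol_damping[OF assms]
        flip: sum_divide_distrib)
  also have "\<dots> = clique_fidelity n c"
  proof -
    have "(4::real) ^ n = 2 ^ n * 2 ^ n" by (simp flip: power_mult_distrib)
    then show ?thesis
      unfolding clique_fidelity_def power_divide power_mult_distrib by (simp add: field_simps)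
  qed
  finally show ?thesis by (simp add: c_def)
qed

subsection \<open>Estimating the fidelity\<close>

lemma midpoint_power_le:
  fixes q :: real
  assumes "0 \<le> q" "q \<le> 1"
  shows "((1 + q) / 2) ^ k \<le> (1 + q ^ k) / 2"
proof (induction k)
  case (Suc k)
  have "((1 + q) / 2) ^ Suc k \<le> (1 + q ^ k) / 2 * ((1 + q) / 2)"
    using Suc assms by (simp add: mult_right_mono)
  also have "\<dots> \<le> (1 + q ^ Suc k) / 2"
  proof -
    have "0 \<le> (1 - q) * (1 - q ^ k)"
      using assms by (simp add: power_le_one)
    then show ?thesis by (simp add: algebra_simps)
  qed
  finally show ?case .
qed simp

text \<open>On each half of [0, 1], the difference of the two sides is expanded in the Bernstein
  basis of that interval, where all its coefficients are nonnegative.\<close>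

lemma clique_excess_poly_le:
  fixes y :: real
  assumes "0 \<le> y" "y \<le> 1"
  shows "((1 + y) / 2) ^ 8 / 2 + y ^ 8 / 2 - y ^ 6 \<le> 1 / 16"
proof (cases "y \<le> 1/2")
  case True
  have "0 \<le> 31/2 * (1/2 - y)^8 + 122 * y * (1/2 - y)^7 + 833/2 * y^2 * (1/2 - y)^6
      + 1603/2 * y^3 * (1/2 - y)^5 + 15085/16 * y^4 * (1/2 - y)^4 + 5467/8 * y^5 * (1/2 - y)^3
      + 9361/32 * y^6 * (1/2 - y)^2 + 2165/32 * y^7 * (1/2 - y) + 3423/512 * y^8"
    using assms True by (intro add_nonneg_nonneg mult_nonneg_nonneg zero_le_power) auto
  also have "\<dots> = 1/16 - (((1 + y) / 2) ^ 8 / 2 + y ^ 8 / 2 - y ^ 6)"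
    by (simp add: field_simps eval_nat_numeral)
  finally show ?thesis by simp
next
  case False
  have "0 \<le> 3423/512 * (1 - y)^8 + 629/16 * (y - 1/2) * (1 - y)^7
      + 753/8 * (y - 1/2)^2 * (1 - y)^6 + 139 * (y - 1/2)^3 * (1 - y)^5
      + 205 * (y - 1/2)^4 * (1 - y)^4 + 304 * (y - 1/2)^5 * (1 - y)^3
      + 288 * (y - 1/2)^6 * (1 - y)^2 + 128 * (y - 1/2)^7 * (1 - y) + 16 * (y - 1/2)^8"
    using assms False by (intro add_nonneg_nonneg mult_nonneg_nonneg zero_le_power) auto
  also have "\<dots> = 1/16 - (((1 + y) / 2) ^ 8 / 2 + y ^ 8 / 2 - y ^ 6)"
    by (simp add: field_simps eval_nat_numeral)
  finally show ?thesis by simp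
qed

lemma clique_fidelity_ge:
  fixes c :: real
  assumes "0 \<le> c" "c \<le> 1"
  shows "c ^ (6 * k) \<le> clique_fidelity (8 * k) c"
proof -
  define A where "A = (1 + c) / 2"
  have "A ^ 2 - c = ((1 - c) / 2) ^ 2" by (simp add: A_def power2_eq_square field_simps)
  then have "c \<le> A ^ 2" by (metis diff_ge_0_iff_ge zero_le_power2)
  then have "c ^ (2 * k) \<le> A ^ (4 * k)"
    using power_mono[of c "A ^ 2" "2 * k"] assms by (simp add: power_mult[symmetric])
  then have "c ^ (2 * k) * c ^ (4 * k) \<le> A ^ (4 * k) * c ^ (4 * k)"
    using assms by (simp add: mult_right_mono)
  also have "\<dots> \<le> ((A ^ (4 * k))\<^sup>2 + (c ^ (4 * k))\<^sup>2) / 2"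
    using sum_squares_bound[of "A ^ (4 * k)" "c ^ (4 * k)"] by simp
  also have "\<dots> = (A ^ (8 * k) + c ^ (8 * k)) / 2"
    by (simp flip: power_mult)
  also have "\<dots> \<le> clique_fidelity (8 * k) c"
    using assms by (simp add: clique_fidelity_def A_def)
  finally show ?thesis by (simp flip: power_add)
qed

lemma ln_one_minus_le:
  fixes x :: real
  assumes "0 \<le> x" "x < 1"
  shows "ln (1 - x) \<le> - x - x ^ 2 / 2"
proof -
  let ?f = "\<lambda>t. ln (1 - t) + t + t ^ 2 / 2"
  have "?f x \<le> ?f 0"
  proof (rule DERIV_nonpos_imp_nonincreasing[OF assms(1)])
    fix t :: real assume t: "0 \<le> t" "t \<le> x"
    then have "t < 1" using assms by simp
    then have "(?f has_real_derivative (- 1 / (1 - t) + 1 + t)) (at t)"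
      by (auto intro!: derivative_eq_intros simp: field_simps)
    moreover have "- 1 / (1 - t) + 1 + t \<le> 0"
      using t \<open>t < 1\<close> by (simp add: field_simps)
    ultimately show "\<exists>y. (?f has_real_derivative y) (at t) \<and> y \<le> 0" by blast
  qed
  then show ?thesis by simp
qed

definition bound7_head :: "nat \<Rightarrow> real" where
  "bound7_head k = 1/2 * (1 - 1 / (8 * real k)) * (1 - 1 / (4 * real k)) ^ (8 * k - 2)"

text \<open>ln (2 * bound7_head k) at x = 1/(4k), extended to real x so that monotonicity in k
  follows by differentiation.\<close>

definition bound7_head_log :: "real \<Rightarrow> real" where
  "bound7_head_log x = ln (1 - x / 2) + (2 / x - 2) * ln (1 - x)"

lemma bound7_head_eq_exp:
  assumes "k \<ge> 1"
  shows "bound7_head k = exp (bound7_head_log (1 / (4 * real k))) / 2"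
proof -
  have "exp (ln (1 - 1 / (4 * real k) / 2)) = 1 - 1 / (8 * real k)"
    using assms by (simp add: field_simps)
  moreover have "exp ((2 / (1 / (4 * real k)) - 2) * ln (1 - 1 / (4 * real k)))
      = (1 - 1 / (4 * real k)) ^ (8 * k - 2)"
  proof -
    have exponent: "2 / (1 / (4 * real k)) - 2 = real (8 * k - 2)"
      using assms by (simp add: of_nat_diff)
    have "0 < 1 - 1 / (4 * real k)"
      using assms by (simp add: field_simps)
    then show ?thesis unfolding exponent by (simp add: ln_realpow[symmetric])
  qed
  ultimately show ?thesis
    unfolding bound7_head_def bound7_head_log_def exp_add by simp
qed

lemma bound7_head_log_mono:
  assumes "0 < a" "a \<le> b" "b \<le> 1/4"
  shows "bound7_head_log a \<le> bound7_head_log b"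
proof (rule DERIV_nonneg_imp_nondecreasing[OF assms(2)])
  fix x :: real assume "a \<le> x" "x \<le> b"
  then have x: "0 < x" "x \<le> 1/4" using assms by auto
  have "(bound7_head_log has_real_derivative
      ((- 1/2) / (1 - x / 2) + (- 2 / x ^ 2) * ln (1 - x) + (2 / x - 2) * (- 1 / (1 - x)))) (at x)"
    unfolding bound7_head_log_def using x
    by (auto intro!: derivative_eq_intros simp: power2_eq_square)
  moreover have "(- 1/2) / (1 - x / 2) = - 1 / (2 - x)" "(2 / x - 2) * (- 1 / (1 - x)) = - 2 / x"
    using x by (simp_all add: field_simps)
  ultimately have "(bound7_head_log has_real_derivative
      (- 1 / (2 - x) - 2 * ln (1 - x) / x ^ 2 - 2 / x)) (at x)"
    by simp
  moreover have "0 \<le> - 1 / (2 - x) - 2 * ln (1 - x) / x ^ 2 - 2 / x"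
  proof -
    have "2 / x + 1 = (2 * x + x ^ 2) / x ^ 2"
      using x by (simp add: field_simps power2_eq_square)
    also have "\<dots> \<le> - 2 * ln (1 - x) / x ^ 2"
      using ln_one_minus_le[of x] x by (intro divide_right_mono) auto
    finally have "2 / x + 1 \<le> - 2 * ln (1 - x) / x ^ 2" .
    moreover have "1 / (2 - x) \<le> 1" using x by (simp add: field_simps)
    ultimately show ?thesis by simp
  qed
  ultimately show "\<exists>y. (bound7_head_log has_real_derivative y) (at x) \<and> 0 \<le> y" by blast
qed

lemma bound7_head_Suc_le:
  assumes "k \<ge> 1"
  shows "bound7_head (Suc k) \<le> bound7_head k"
proof -
  have "bound7_head_log (1 / (4 * real (Suc k))) \<le> bound7_head_log (1 / (4 * real k))"
    using assms by (intro bound7_head_log_mono) (auto simp: field_simps)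
  then show ?thesis using assms by (simp add: bound7_head_eq_exp)
qed

lemma bound7_head_tendsto: "bound7_head \<longlonglongrightarrow> exp (-2) / 2"
  unfolding bound7_head_def by real_asymp

lemma bound7_head_ge:
  assumes "k \<ge> 1"
  shows "exp (-2) / 2 \<le> bound7_head k"
proof -
  have "decseq (\<lambda>m. bound7_head (Suc m))"
    by (rule decseq_SucI) (simp add: bound7_head_Suc_le)
  moreover have "(\<lambda>m. bound7_head (Suc m)) \<longlonglongrightarrow> exp (-2) / 2"
    using bound7_head_tendsto by (rule LIMSEQ_Suc)
  ultimately have "exp (-2) / 2 \<le> bound7_head (Suc (k - 1))"
    by (rule decseq_ge)
  then show ?thesis using assms by simp
qed

lemma bound7_eq: "bound7 k = bound7_head k + 1/2 * (2/3) ^ (8 * k) + 1 / (3 * real k)"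
  by (simp add: bound7_def bound7_head_def)

lemma bound7_Suc_le:
  assumes "k \<ge> 1"
  shows "bound7 (Suc k) \<le> bound7 k"
proof -
  have "(2/3::real) ^ (8 * Suc k) \<le> (2/3) ^ (8 * k)"
    by (rule power_decreasing) auto
  moreover have "1 / (3 * real (Suc k)) \<le> 1 / (3 * real k)"
    using assms by (simp add: field_simps)
  ultimately show ?thesis
    unfolding bound7_eq using bound7_head_Suc_le[OF assms] by linarith
qed

lemma bound7_tendsto: "bound7 \<longlonglongrightarrow> 1 / (2 * exp 2)"
proof -
  have "bound7 \<longlonglongrightarrow> exp (-2) / 2"
    unfolding bound7_def by real_asymp
  then show ?thesis by (simp add: exp_minus field_simps)
qed

lemma exp_minus_two_ge: "1 / 16 \<le> exp (- 2 :: real) / 2"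
proof -
  have "exp (2::real) = exp 1 * exp 1" by (simp flip: exp_add)
  also have "\<dots> \<le> 272/100 * (272/100)"
    using e_less_272 by (intro mult_mono) auto
  finally have "exp (2::real) \<le> 8" by simp
  then show ?thesis by (simp add: exp_minus field_simps)
qed

lemma clique_fidelity_less:
  fixes c :: real
  assumes "0 \<le> c" "c \<le> 1" "k \<ge> 1"
  shows "clique_fidelity (8 * k) c - c ^ (6 * k) < bound7 k"
proof -
  define y where "y = c ^ k"
  have y: "0 \<le> y" "y \<le> 1" using assms by (simp_all add: y_def power_le_one)
  have "((1 + c) / 2) ^ (8 * k) \<le> ((1 + y) / 2) ^ 8"
    using midpoint_power_le[OF assms(1,2), of k] assms
    by (simp add: y_def mult.commute[of 8] power_mult power_mono)
  moreover have "c ^ (8 * k) = y ^ 8" "c ^ (6 * k) = y ^ 6"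
    by (simp_all add: y_def mult.commute power_mult)
  moreover have "((1 - c) / 2) ^ (8 * k) < (2/3) ^ (8 * k)"
    using assms by (intro power_strict_mono) auto
  moreover have "1 / 16 \<le> bound7_head k"
    using bound7_head_ge[OF assms(3)] exp_minus_two_ge by linarith
  moreover have "0 < 1 / (3 * real k)" using assms by simp
  ultimately show ?thesis
    using clique_excess_poly_le[OF y] unfolding clique_fidelity_def bound7_eq add_divide_distrib
    by linarith
qed

theorem mainTheorem7:
  fixes k :: nat and p :: real
  assumes "k \<ge> 1" and "0 \<le> p" and "p \<le> 3/4"
  shows "Im (fidelity_full (8 * k) p) = 0
       \<and> 0 \<le> Re (fidelity_full (8 * k) p) - F_est k p
       \<and> Re (fidelity_full (8 * k) p) - F_est k p < bound7 k
       \<and> (\<forall>m\<ge>1. bound7 (Suc m) \<le> bound7 m)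
       \<and> (bound7 \<longlonglongrightarrow> 1 / (2 * exp 2))"
proof -
  define c where "c = 1 - 4/3 * p"
  have c: "0 \<le> c" "c \<le> 1" using assms by (simp_all add: c_def)
  have "fidelity_full (8 * k) p = of_real (clique_fidelity (8 * k) c)"
    using assms by (simp add: fidelity_full_eq_clique_fidelity c_def)
  moreover have "F_est k p = c ^ (6 * k)"
    by (simp add: F_est_def c_def)
  ultimately show ?thesis
    using clique_fidelity_ge[OF c] clique_fidelity_less[OF c assms(1)]
      bound7_Suc_le bound7_tendsto by simp
qed

end
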